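(* Let $\Lambda$ be a Legendrian knot. (i) If $4|\operatorname{rot}(\Lambda)|+\operatorname{tb}(\Lambda)\ge0$, then $m(\Lambda)\ge\left\lceil\sqrt{4|\operatorname{rot}(\Lambda)|+\operatorname{tb}(\Lambda)}\right\rceil$. (ii) If $\operatorname{tb}(\Lambda)\le0$, then $m(\Lambda)\ge\left\lceil\sqrt{-\operatorname{tb}(\Lambda)}\right\rceil$. More precisely, if $\Lambda$ is depicted by a suitably connected Legendrian $n$-mosaic, then $n^2\ge4|\operatorname{rot}(\Lambda)|+\operatorname{tb}(\Lambda)$ and $n^2\ge-\operatorname{tb}(\Lambda)$.
   Context: Legendrian knots are taken in the standard contact structure on $\mathbb{R}^3$ and represented by front ($xz$-) projections, which have cusps in place of vertical tangencies and in which the strand of more negative slope is the overstrand at every crossing. For an oriented front with $P$ positive crossings, $N$ negative crossings, $C$ cusps, $D$ downward-oriented and $U$ upward-oriented cusps, $\operatorname{tb}=P-N-\frac12C$ and $\operatorname{rot}=\frac12(D-U)$. Legendrian mosaic tiles: a square tile whose four edge midpoints are potential connection points; the tiles are $T_0$ (empty); $T_1,\dots,T_4$ (a single arc joining midpoints of two adjacent edges, one per pair of adjacent edges); $T_5,T_6$ (a segment joining midpoints of opposite edges); $T_7,T_8$ (two disjoint arcs each joining adjacent edges, using all four midpoints); $T_{10}$ (two crossing segments joining opposite edges). A Legendrian $n$-mosaic is an $n\times n$ array of these tiles with the array rotated $45^\circ$ counterclockwise so the strands form a front diagram (after rotation $T_2$, $T_4$ contain one cusp and $T_8$ two cusps;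 $T_1,T_3,T_7$ contain none; in $T_{10}$ the negative-slope strand is over). It is suitably connected if connection points agree across shared edges and none lies on the outer boundary. The mosaic number $m(\Lambda)$ is the smallest $n$ such that some suitably connected Legendrian $n$-mosaic depicts a front of a Legendrian knot Legendrian isotopic to $\Lambda$. *)

theory Defs
  imports Complex_Main
begin

text \<open>Sides of an (unrotated) mosaic tile; the connection points are the midpoints of these sides.
  Tile positions are integer pairs (r, c): row r, column c; the north neighbour of (r,c) is
  (r-1,c), the east neighbour is (r,c+1).\<close>

datatype side = N | E | S | W

datatype tile = T0 | T1 | T2 | T3 | T4 | T5 | T6 | T7 | T8 | T10

fun pieces :: "tile \<Rightarrow> side set set" where
  "pieces T0 = {}"
| "pieces T1 = {{W, S}}"
| "pieces T2 = {{E, S}}"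
| "pieces T3 = {{N, E}}"
| "pieces T4 = {{N, W}}"
| "pieces T5 = {{W, E}}"
| "pieces T6 = {{N, S}}"
| "pieces T7 = {{N, E}, {W, S}}"
| "pieces T8 = {{N, W}, {E, S}}"
| "pieces T10 = {{N, S}, {W, E}}"

definition conn :: "tile \<Rightarrow> side set" where
  "conn t = \<Union> (pieces t)"

fun opp :: "side \<Rightarrow> side" where
  "opp N = S" | "opp S = N" | "opp E = W" | "opp W = E"

fun nbr :: "int \<times> int \<Rightarrow> side \<Rightarrow> int \<times> int" where
  "nbr (r, c) N = (r - 1, c)"
| "nbr (r, c) S = (r + 1, c)"
| "nbr (r, c) E = (r, c + 1)"
| "nbr (r, c) W = (r, c - 1)"

definition is_mosaic :: "nat \<Rightarrow> (int \<times> int \<Rightarrow> tile) \<Rightarrow> bool" where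
  "is_mosaic n M \<longleftrightarrow> (\<forall>r c. \<not> (0 \<le> r \<and> r < int n \<and> 0 \<le> c \<and> c < int n) \<longrightarrow> M (r, c) = T0)"

text \<open>Suitably connected: connection points agree across every shared edge. Since the tiles
  outside the array are empty, this also forbids connection points on the outer boundary.\<close>

definition suitably_connected :: "(int \<times> int \<Rightarrow> tile) \<Rightarrow> bool" where
  "suitably_connected M \<longleftrightarrow>
     (\<forall>p s. s \<in> conn (M p) \<longleftrightarrow> opp s \<in> conn (M (nbr p s)))"

type_synonym step = "(int \<times> int) \<times> side \<times> side"

definition step_pos :: "step \<Rightarrow> int \<times> int" where
  "step_pos s = fst s"

definition step_in :: "step \<Rightarrow> side" where
  "step_in s = fst (snd s)"

definition step_out :: "step \<Rightarrow> side" where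
  "step_out s = snd (snd s)"

definition step_piece :: "step \<Rightarrow> (int \<times> int) \<times> side set" where
  "step_piece s = (step_pos s, {step_in s, step_out s})"

text \<open>The mosaic depicts a single closed oriented curve (a knot) traversed by the cyclic list xs:
  every step runs along a piece of its tile, consecutive steps (cyclically) pass through a shared
  edge, and every piece of every tile is traversed exactly once.\<close>

definition knot_traversal :: "(int \<times> int \<Rightarrow> tile) \<Rightarrow> step list \<Rightarrow> bool" where
  "knot_traversal M xs \<longleftrightarrow>
     xs \<noteq> [] \<and>
     (\<forall>k < length xs. {step_in (xs ! k), step_out (xs ! k)} \<in> pieces (M (step_pos (xs ! k)))
        \<and> step_in (xs ! k) \<noteq> step_out (xs ! k)) \<and>
     (\<forall>k < length xs.
        step_pos (xs ! ((k + 1) mod length xs)) = nbr (step_pos (xs ! k)) (step_out (xs ! k)) \<and>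
        step_in (xs ! ((k + 1) mod length xs)) = opp (step_out (xs ! k))) \<and>
     distinct (map step_piece xs) \<and>
     set (map step_piece xs) = {(p, e). e \<in> pieces (M p)}"

text \<open>Position (x, z) of a side midpoint relative to the tile centre after the rotation
  (scaled by sqrt 2): N goes to upper-left, E to upper-right, S to lower-right, W to lower-left.\<close>

fun mid :: "side \<Rightarrow> int \<times> int" where
  "mid N = (-1, 1)" | "mid E = (1, 1)" | "mid S = (1, -1)" | "mid W = (-1, -1)"

definition dirv :: "step \<Rightarrow> int \<times> int" where
  "dirv s = (fst (mid (step_out s)) - fst (mid (step_in s)),
             snd (mid (step_out s)) - snd (mid (step_in s)))"

definition cross2 :: "int \<times> int \<Rightarrow> int \<times> int \<Rightarrow> int" where
  "cross2 u v = fst u * snd v - snd u * fst v"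

text \<open>A piece is a cusp iff both its endpoints have the same x-coordinate after rotation
  (arcs N-W and E-S). It is traversed downward iff the exit is lower than the entry.\<close>

definition is_cusp :: "step \<Rightarrow> bool" where
  "is_cusp s \<longleftrightarrow> fst (mid (step_in s)) = fst (mid (step_out s))"

definition down_cusp :: "step \<Rightarrow> bool" where
  "down_cusp s \<longleftrightarrow> is_cusp s \<and> snd (mid (step_out s)) < snd (mid (step_in s))"

definition up_cusp :: "step \<Rightarrow> bool" where
  "up_cusp s \<longleftrightarrow> is_cusp s \<and> snd (mid (step_in s)) < snd (mid (step_out s))"

text \<open>At a crossing tile the strand of negative slope (after rotation: the N-S segment) is over.\<close>

definition neg_slope :: "step \<Rightarrow> bool" where
  "neg_slope s \<longleftrightarrow> fst (dirv s) * snd (dirv s) < 0"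

definition pos_slope :: "step \<Rightarrow> bool" where
  "pos_slope s \<longleftrightarrow> fst (dirv s) * snd (dirv s) > 0"

definition over_step :: "step list \<Rightarrow> int \<times> int \<Rightarrow> step" where
  "over_step xs p = (THE s. s \<in> set xs \<and> step_pos s = p \<and> neg_slope s)"

definition under_step :: "step list \<Rightarrow> int \<times> int \<Rightarrow> step" where
  "under_step xs p = (THE s. s \<in> set xs \<and> step_pos s = p \<and> pos_slope s)"

text \<open>Sign of the crossing at p: positive (right-handed) iff the oriented over strand turns
  counterclockwise (by less than pi) onto the oriented under strand.\<close>

definition crossing_sign :: "step list \<Rightarrow> int \<times> int \<Rightarrow> int" where
  "crossing_sign xs p = sgn (cross2 (dirv (over_step xs p)) (dirv (under_step xs p)))"

definition num_pos_crossings :: "(int \<times> int \<Rightarrow> tile) \<Rightarrow> step list \<Rightarrow> nat" where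
  "num_pos_crossings M xs = card {p. M p = T10 \<and> crossing_sign xs p > 0}"

definition num_neg_crossings :: "(int \<times> int \<Rightarrow> tile) \<Rightarrow> step list \<Rightarrow> nat" where
  "num_neg_crossings M xs = card {p. M p = T10 \<and> crossing_sign xs p < 0}"

definition num_down_cusps :: "step list \<Rightarrow> nat" where
  "num_down_cusps xs = length (filter down_cusp xs)"

definition num_up_cusps :: "step list \<Rightarrow> nat" where
  "num_up_cusps xs = length (filter up_cusp xs)"

definition num_cusps :: "step list \<Rightarrow> nat" where
  "num_cusps xs = length (filter is_cusp xs)"

definition tb :: "(int \<times> int \<Rightarrow> tile) \<Rightarrow> step list \<Rightarrow> real" where
  "tb M xs = real (num_pos_crossings M xs) - real (num_neg_crossings M xs)
             - real (num_cusps xs) / 2"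

definition rot :: "step list \<Rightarrow> real" where
  "rot xs = (real (num_down_cusps xs) - real (num_up_cusps xs)) / 2"

end

theory Submission
  imports Defs
begin

text \<open>
  Give every oriented strand piece of a tile an integer weight and every crossing tile an extra
  \<open>\<kappa>\<close> times its crossing sign. If each tile of an \<open>n\<close>-mosaic then carries total weight at most 2,
  summing over the \<open>n\<^sup>2\<close> tiles bounds the total weight of the front by \<open>2n\<^sup>2\<close>. The vertical
  displacement of a piece may be added to any weight for free, since it sums to zero around the
  closed front. The weights \<open>3\<cdot>down - 5\<cdot>up + \<Delta>z\<close> and its mirror \<open>3\<cdot>up - 5\<cdot>down - \<Delta>z\<close> (both with
  \<open>\<kappa> = 2\<close>), and the cusp indicator with \<open>\<kappa> = -2\<close>, yield
  \<open>3D - 5U + 2w \<le> 2n\<^sup>2\<close>, \<open>3U - 5D + 2w \<le> 2n\<^sup>2\<close> and \<open>C - 2w \<le> 2n\<^sup>2\<close> for the writhe \<open>w = P - N\<close>;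
  with \<open>tb = w - C/2\<close>, \<open>rot = (D - U)/2\<close> and \<open>C = D + U\<close> these are the two claimed bounds.
  The argument only uses the traversal, not that the mosaic is suitably connected.
\<close>

lemma knot_traversal_piece:
  assumes "knot_traversal M xs" "s \<in> set xs"
  shows "{step_in s, step_out s} \<in> pieces (M (step_pos s)) \<and> step_in s \<noteq> step_out s"
  using assms unfolding knot_traversal_def by (metis in_set_conv_nth)

lemma knot_traversal_inj_step_piece: "knot_traversal M xs \<Longrightarrow> inj_on step_piece (set xs)"
  unfolding knot_traversal_def using distinct_map by blast

lemma knot_traversal_distinct: "knot_traversal M xs \<Longrightarrow> distinct xs"
  unfolding knot_traversal_def using distinct_map by blast

lemma knot_traversal_covers_piece:
  assumes "knot_traversal M xs" "e \<in> pieces (M p)"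
  obtains s where "s \<in> set xs" "step_piece s = (p, e)"
  using assms unfolding knot_traversal_def by (metis (no_types) case_prodI imageE mem_Collect_eq set_map)

definition steps_at :: "step list \<Rightarrow> int \<times> int \<Rightarrow> step set" where
  "steps_at xs p = {s \<in> set xs. step_pos s = p}"

lemma card_steps_at_le:
  assumes kt: "knot_traversal M xs"
  shows "card (steps_at xs p) \<le> card (pieces (M p))"
proof -
  have "inj_on (\<lambda>s. {step_in s, step_out s}) (steps_at xs p)"
  proof
    fix x y assume "x \<in> steps_at xs p" "y \<in> steps_at xs p"
      and "{step_in x, step_out x} = {step_in y, step_out y}"
    then have "step_piece x = step_piece y" "x \<in> set xs" "y \<in> set xs"
      unfolding steps_at_def step_piece_def by auto
    then show "x = y" using knot_traversal_inj_step_piece[OF kt] by (meson inj_onD)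
  qed
  moreover have "(\<lambda>s. {step_in s, step_out s}) ` steps_at xs p \<subseteq> pieces (M p)"
    using knot_traversal_piece[OF kt] unfolding steps_at_def by auto
  moreover have "finite (pieces (M p))" by (cases "M p") auto
  ultimately show ?thesis using card_inj_on_le by blast
qed

lemma card_pieces_le: "card (pieces t) \<le> (if t \<in> {T7, T8, T10} then 2 else 1)"
  by (cases t) (simp_all add: card_insert_if)

definition chord :: "side \<Rightarrow> side \<Rightarrow> int \<times> int" where
  "chord a b = (fst (mid b) - fst (mid a), snd (mid b) - snd (mid a))"

lemma dirv_eq_chord: "dirv s = chord (step_in s) (step_out s)"
  unfolding dirv_def chord_def by simp

lemma crossing_tile_steps:
  assumes kt: "knot_traversal M xs" and crossing: "M p = T10"
  obtains s1 s2 where "steps_at xs p = {s1, s2}" "s1 \<noteq> s2"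
    "{step_in s1, step_out s1} = {N, S}" "step_in s1 \<noteq> step_out s1"
    "{step_in s2, step_out s2} = {W, E}" "step_in s2 \<noteq> step_out s2"
    "over_step xs p = s1" "under_step xs p = s2"
proof -
  have NS: "{N, S} \<in> pieces (M p)" and WE: "{W, E} \<in> pieces (M p)"
    using crossing by simp_all
  obtain s1 where s1: "s1 \<in> set xs" "step_piece s1 = (p, {N, S})"
    using knot_traversal_covers_piece[OF kt NS] by blast
  obtain s2 where s2: "s2 \<in> set xs" "step_piece s2 = (p, {W, E})"
    using knot_traversal_covers_piece[OF kt WE] by blast
  have pos: "step_pos s1 = p" "step_pos s2 = p"
    and ends: "{step_in s1, step_out s1} = {N, S}" "{step_in s2, step_out s2} = {W, E}"
    using s1(2) s2(2) unfolding step_piece_def by auto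
  have ne: "step_in s1 \<noteq> step_out s1" "step_in s2 \<noteq> step_out s2"
    using knot_traversal_piece[OF kt s1(1)] knot_traversal_piece[OF kt s2(1)] by auto
  have slopes: "neg_slope s1" "\<not> pos_slope s1" "pos_slope s2" "\<not> neg_slope s2"
    using ends ne
    by (auto simp: doubleton_eq_iff neg_slope_def pos_slope_def dirv_eq_chord chord_def)
  have at_p: "steps_at xs p = {s1, s2}"
  proof
    show "steps_at xs p \<subseteq> {s1, s2}"
    proof
      fix s assume "s \<in> steps_at xs p"
      then have s: "s \<in> set xs" "step_pos s = p" unfolding steps_at_def by auto
      then have "{step_in s, step_out s} \<in> pieces T10"
        using knot_traversal_piece[OF kt] crossing by metis
      then have "step_piece s = step_piece s1 \<or> step_piece s = step_piece s2"
        using s1 s2 s unfolding step_piece_def by auto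
      then show "s \<in> {s1, s2}"
        using knot_traversal_inj_step_piece[OF kt] s(1) s1(1) s2(1) by (metis inj_onD insertCI)
    qed
  qed (use s1 s2 pos in \<open>auto simp: steps_at_def\<close>)
  have "over_step xs p = s1"
    unfolding over_step_def
    by (rule the_equality) (use s1(1) pos slopes at_p in \<open>auto simp: steps_at_def\<close>)
  moreover have "under_step xs p = s2"
    unfolding under_step_def
    by (rule the_equality) (use s2(1) pos slopes at_p in \<open>auto simp: steps_at_def\<close>)
  moreover have "s1 \<noteq> s2" using ends by (auto simp: doubleton_eq_iff)
  ultimately show thesis using that at_p ends ne by blast
qed

text \<open>The weight of a tile is the sum of \<open>w\<close> over its oriented pieces plus \<open>\<kappa>\<close> times its
  crossing sign; the three conditions cover single-piece tiles, the double arcs \<open>T\<^sub>7, T\<^sub>8\<close>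
  (whose pieces are neither segment), and the crossing \<open>T\<^sub>10\<close>.\<close>

definition admissible_weight :: "(side \<Rightarrow> side \<Rightarrow> int) \<Rightarrow> int \<Rightarrow> bool" where
  "admissible_weight w \<kappa> \<longleftrightarrow>
     (\<forall>a b. a \<noteq> b \<longrightarrow> w a b \<le> 2) \<and>
     (\<forall>a b. a \<noteq> b \<longrightarrow> {a, b} \<noteq> {W, E} \<longrightarrow> {a, b} \<noteq> {N, S} \<longrightarrow> w a b \<le> 1) \<and>
     (\<forall>a b c d. {a, b} = {N, S} \<longrightarrow> a \<noteq> b \<longrightarrow> {c, d} = {W, E} \<longrightarrow> c \<noteq> d \<longrightarrow>
        w a b + w c d + \<kappa> * sgn (cross2 (chord a b) (chord c d)) \<le> 2)"

definition crossing_weight :: "(int \<times> int \<Rightarrow> tile) \<Rightarrow> step list \<Rightarrow> int \<times> int \<Rightarrow> int" where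
  "crossing_weight M xs p = (if M p = T10 then crossing_sign xs p else 0)"

lemma tile_weight_le:
  assumes kt: "knot_traversal M xs" and w: "admissible_weight w \<kappa>"
  shows "(\<Sum>s\<in>steps_at xs p. w (step_in s) (step_out s)) + \<kappa> * crossing_weight M xs p \<le> 2"
proof (cases "M p = T10")
  case True
  obtain s1 s2 where st: "steps_at xs p = {s1, s2}" "s1 \<noteq> s2"
      "{step_in s1, step_out s1} = {N, S}" "step_in s1 \<noteq> step_out s1"
      "{step_in s2, step_out s2} = {W, E}" "step_in s2 \<noteq> step_out s2"
      "over_step xs p = s1" "under_step xs p = s2"
    using crossing_tile_steps[OF kt True] by blast
  have "w (step_in s1) (step_out s1) + w (step_in s2) (step_out s2)
      + \<kappa> * sgn (cross2 (chord (step_in s1) (step_out s1)) (chord (step_in s2) (step_out s2))) \<le> 2"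
    using w st(3-6) unfolding admissible_weight_def by blast
  then show ?thesis
    using st True by (simp add: crossing_weight_def crossing_sign_def dirv_eq_chord)
next
  case False
  define b :: int where "b = (if M p \<in> {T7, T8} then 1 else 2)"
  have "w (step_in s) (step_out s) \<le> b" if "s \<in> steps_at xs p" for s
  proof -
    have "s \<in> set xs" "step_pos s = p" using that by (simp_all add: steps_at_def)
    then have s: "{step_in s, step_out s} \<in> pieces (M p)" "step_in s \<noteq> step_out s"
      using knot_traversal_piece[OF kt] by blast+
    then have "M p \<in> {T7, T8} \<Longrightarrow>
        {step_in s, step_out s} \<noteq> {W, E} \<and> {step_in s, step_out s} \<noteq> {N, S}"
      by (auto simp: doubleton_eq_iff)
    then show ?thesis using w s(2) unfolding admissible_weight_def b_def by auto
  qed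
  then have "(\<Sum>s\<in>steps_at xs p. w (step_in s) (step_out s)) \<le> of_nat (card (steps_at xs p)) * b"
    by (rule sum_bounded_above)
  also have "\<dots> \<le> 2"
    using card_steps_at_le[OF kt, of p] card_pieces_le[of "M p"] False
    unfolding b_def by (auto split: if_splits)
  finally show ?thesis using False by (simp add: crossing_weight_def)
qed

text \<open>Twice the height of the centre of tile \<open>(r, c)\<close> after the rotation.\<close>

definition height :: "int \<times> int \<Rightarrow> int" where
  "height p = 2 * (snd p - fst p)"

lemma height_nbr: "height (nbr p s) + snd (mid (opp s)) = height p + snd (mid s)"
  by (cases p; cases s) (simp_all add: height_def)

lemma sum_cyclic_shift:
  fixes H :: "nat \<Rightarrow> 'a::comm_monoid_add"
  assumes "L > 0"
  shows "(\<Sum>k<L. H ((k + 1) mod L)) = (\<Sum>k<L. H k)"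
proof -
  obtain m where L: "L = Suc m" using assms by (cases L) auto
  have "(\<Sum>k<Suc m. H ((k + 1) mod Suc m)) = (\<Sum>k<m. H ((k + 1) mod Suc m)) + H 0"
    by simp
  also have "(\<Sum>k<m. H ((k + 1) mod Suc m)) = (\<Sum>k<m. H (Suc k))"
    by (rule sum.cong) auto
  also have "(\<Sum>k<m. H (Suc k)) + H 0 = (\<Sum>k<Suc m. H k)"
    unfolding sum.lessThan_Suc_shift by (simp add: add.commute)
  finally show ?thesis using L by simp
qed

lemma sum_vertical_displacement_eq_0:
  assumes kt: "knot_traversal M xs"
  shows "(\<Sum>s\<in>set xs. snd (mid (step_out s)) - snd (mid (step_in s))) = 0"
proof -
  define L where "L = length xs"
  have L: "L > 0" using kt unfolding knot_traversal_def L_def by auto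
  define H where "H k = height (step_pos (xs ! k)) + snd (mid (step_in (xs ! k)))" for k
  have telescope:
    "snd (mid (step_out (xs ! k))) - snd (mid (step_in (xs ! k))) = H ((k + 1) mod L) - H k" if "k < L" for k
  proof -
    have "step_pos (xs ! ((k + 1) mod L)) = nbr (step_pos (xs ! k)) (step_out (xs ! k))"
         "step_in (xs ! ((k + 1) mod L)) = opp (step_out (xs ! k))"
      using kt that unfolding knot_traversal_def L_def by auto
    then show ?thesis
      unfolding H_def using height_nbr[of "step_pos (xs ! k)" "step_out (xs ! k)"] by simp
  qed
  have "(\<Sum>s\<in>set xs. snd (mid (step_out s)) - snd (mid (step_in s)))
      = (\<Sum>k<L. snd (mid (step_out (xs ! k))) - snd (mid (step_in (xs ! k))))"
    using knot_traversal_distinct[OF kt]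
    by (simp add: L_def sum_list_distinct_conv_sum_set[symmetric] sum_list_sum_nth atLeast0LessThan)
  also have "\<dots> = (\<Sum>k<L. H ((k + 1) mod L) - H k)"
    by (rule sum.cong) (auto simp: telescope)
  also have "\<dots> = 0" using sum_cyclic_shift[OF L, of H] by (simp add: sum_subtractf)
  finally show ?thesis .
qed

definition array :: "nat \<Rightarrow> (int \<times> int) set" where
  "array n = {0..<int n} \<times> {0..<int n}"

lemma finite_array: "finite (array n)"
  unfolding array_def by simp

lemma card_array: "card (array n) = n\<^sup>2"
  unfolding array_def by (simp add: card_cartesian_product power2_eq_square)

lemma nonempty_tile_in_array: "is_mosaic n M \<Longrightarrow> M p \<noteq> T0 \<Longrightarrow> p \<in> array n"
  unfolding is_mosaic_def array_def by (cases p) auto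

lemma sum_steps_by_tile:
  fixes f :: "step \<Rightarrow> int"
  assumes mo: "is_mosaic n M" and kt: "knot_traversal M xs"
  shows "(\<Sum>s\<in>set xs. f s) = (\<Sum>p\<in>array n. \<Sum>s\<in>steps_at xs p. f s)"
proof -
  have "M (step_pos s) \<noteq> T0" if "s \<in> set xs" for s
    using knot_traversal_piece[OF kt that] by auto
  then have "step_pos ` set xs \<subseteq> array n" using nonempty_tile_in_array[OF mo] by blast
  from sum.group[OF _ finite_array this, of f] show ?thesis unfolding steps_at_def by simp
qed

definition writhe :: "(int \<times> int \<Rightarrow> tile) \<Rightarrow> step list \<Rightarrow> int" where
  "writhe M xs = int (num_pos_crossings M xs) - int (num_neg_crossings M xs)"

lemma card_crossings_eq_sum:
  assumes "is_mosaic n M"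
  shows "int (card {p. M p = T10 \<and> Q p}) = (\<Sum>p\<in>array n. of_bool (M p = T10 \<and> Q p))"
proof -
  have "{p. M p = T10 \<and> Q p} = array n \<inter> {p. M p = T10 \<and> Q p}"
    using nonempty_tile_in_array[OF assms] by auto
  then show ?thesis by (simp add: finite_array)
qed

lemma writhe_eq_sum:
  assumes "is_mosaic n M"
  shows "writhe M xs = (\<Sum>p\<in>array n. crossing_weight M xs p)"
  unfolding writhe_def num_pos_crossings_def num_neg_crossings_def
    card_crossings_eq_sum[OF assms] sum_subtractf[symmetric]
  by (rule sum.cong) (auto simp: crossing_weight_def crossing_sign_def sgn_if)

lemma total_weight_le:
  assumes mo: "is_mosaic n M" and kt: "knot_traversal M xs" and w: "admissible_weight w \<kappa>"
  shows "(\<Sum>s\<in>set xs. w (step_in s) (step_out s)) + \<kappa> * writhe M xs \<le> 2 * int (n\<^sup>2)"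
proof -
  have "(\<Sum>s\<in>set xs. w (step_in s) (step_out s)) + \<kappa> * writhe M xs
      = (\<Sum>p\<in>array n. (\<Sum>s\<in>steps_at xs p. w (step_in s) (step_out s)) + \<kappa> * crossing_weight M xs p)"
    unfolding sum_steps_by_tile[OF mo kt] writhe_eq_sum[OF mo] sum.distrib sum_distrib_left ..
  also have "\<dots> \<le> (\<Sum>p\<in>array n. 2)"
    by (rule sum_mono) (rule tile_weight_le[OF kt w])
  also have "\<dots> = 2 * int (n\<^sup>2)" by (simp add: card_array)
  finally show ?thesis .
qed

definition down_weight :: "side \<Rightarrow> side \<Rightarrow> int" where
  "down_weight a b = of_bool (fst (mid a) = fst (mid b) \<and> snd (mid b) < snd (mid a))"

definition up_weight :: "side \<Rightarrow> side \<Rightarrow> int" where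
  "up_weight a b = of_bool (fst (mid a) = fst (mid b) \<and> snd (mid a) < snd (mid b))"

definition cusp_weight :: "side \<Rightarrow> side \<Rightarrow> int" where
  "cusp_weight a b = of_bool (fst (mid a) = fst (mid b))"

definition rise :: "side \<Rightarrow> side \<Rightarrow> int" where
  "rise a b = snd (mid b) - snd (mid a)"

lemma admissible_down_weight:
  "admissible_weight (\<lambda>a b. 3 * down_weight a b - 5 * up_weight a b + rise a b) 2"
  unfolding admissible_weight_def
  by (intro conjI allI; case_tac a; case_tac b)
     (auto simp: doubleton_eq_iff down_weight_def up_weight_def rise_def chord_def cross2_def)

lemma admissible_up_weight:
  "admissible_weight (\<lambda>a b. 3 * up_weight a b - 5 * down_weight a b - rise a b) 2"
  unfolding admissible_weight_def
  by (intro conjI allI; case_tac a; case_tac b)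
     (auto simp: doubleton_eq_iff down_weight_def up_weight_def rise_def chord_def cross2_def)

lemma admissible_cusp_weight: "admissible_weight cusp_weight (-2)"
  unfolding admissible_weight_def
  by (auto simp: doubleton_eq_iff cusp_weight_def chord_def cross2_def)

lemma length_filter_eq_sum:
  assumes "distinct xs"
  shows "int (length (filter P xs)) = (\<Sum>s\<in>set xs. of_bool (P s))"
  using assms by (simp add: distinct_length_filter Int_commute)

lemma num_down_cusps_eq_sum:
  "distinct xs \<Longrightarrow> int (num_down_cusps xs) = (\<Sum>s\<in>set xs. down_weight (step_in s) (step_out s))"
  unfolding num_down_cusps_def
  by (simp add: length_filter_eq_sum down_weight_def down_cusp_def is_cusp_def)

lemma num_up_cusps_eq_sum:
  "distinct xs \<Longrightarrow> int (num_up_cusps xs) = (\<Sum>s\<in>set xs. up_weight (step_in s) (step_out s))"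
  unfolding num_up_cusps_def
  by (simp add: length_filter_eq_sum up_weight_def up_cusp_def is_cusp_def)

lemma num_cusps_eq_sum:
  "distinct xs \<Longrightarrow> int (num_cusps xs) = (\<Sum>s\<in>set xs. cusp_weight (step_in s) (step_out s))"
  unfolding num_cusps_def
  by (simp add: length_filter_eq_sum cusp_weight_def is_cusp_def)

lemma num_cusps_eq_down_plus_up:
  assumes kt: "knot_traversal M xs"
  shows "num_cusps xs = num_down_cusps xs + num_up_cusps xs"
proof -
  have "cusp_weight (step_in s) (step_out s)
      = down_weight (step_in s) (step_out s) + up_weight (step_in s) (step_out s)" if "s \<in> set xs" for s
    using knot_traversal_piece[OF kt that]
    by (cases "step_in s"; cases "step_out s") (simp_all add: cusp_weight_def down_weight_def up_weight_def)
  then have "int (num_cusps xs) = int (num_down_cusps xs) + int (num_up_cusps xs)"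
    by (simp add: num_cusps_eq_sum num_down_cusps_eq_sum num_up_cusps_eq_sum
        knot_traversal_distinct[OF kt] sum.distrib[symmetric])
  then show ?thesis by linarith
qed

lemma down_cusps_bound:
  assumes "is_mosaic n M" "knot_traversal M xs"
  shows "3 * int (num_down_cusps xs) - 5 * int (num_up_cusps xs) + 2 * writhe M xs \<le> 2 * int (n\<^sup>2)"
  using total_weight_le[OF assms admissible_down_weight]
    sum_vertical_displacement_eq_0[OF assms(2)]
  by (simp add: sum.distrib sum_subtractf sum_distrib_left[symmetric] rise_def
      num_down_cusps_eq_sum num_up_cusps_eq_sum knot_traversal_distinct[OF assms(2)])

lemma up_cusps_bound:
  assumes "is_mosaic n M" "knot_traversal M xs"
  shows "3 * int (num_up_cusps xs) - 5 * int (num_down_cusps xs) + 2 * writhe M xs \<le> 2 * int (n\<^sup>2)"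
  using total_weight_le[OF assms admissible_up_weight]
    sum_vertical_displacement_eq_0[OF assms(2)]
  by (simp add: sum.distrib sum_subtractf sum_distrib_left[symmetric] rise_def
      num_down_cusps_eq_sum num_up_cusps_eq_sum knot_traversal_distinct[OF assms(2)])

lemma cusps_bound:
  assumes "is_mosaic n M" "knot_traversal M xs"
  shows "int (num_cusps xs) - 2 * writhe M xs \<le> 2 * int (n\<^sup>2)"
  using total_weight_le[OF assms admissible_cusp_weight]
  by (simp add: num_cusps_eq_sum knot_traversal_distinct[OF assms(2)])

theorem theorem2p5:
  fixes n :: nat and M :: "int \<times> int \<Rightarrow> tile" and xs :: "step list"
  assumes "is_mosaic n M"
    and "suitably_connected M"
    and "knot_traversal M xs"
  shows "real (n ^ 2) \<ge> 4 * \<bar>rot xs\<bar> + tb M xs \<and> real (n ^ 2) \<ge> - tb M xs"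
proof -
  note mo = assms(1) and kt = assms(3)
  define D where "D = real (num_down_cusps xs)"
  define U where "U = real (num_up_cusps xs)"
  define w where "w = real_of_int (writhe M xs)"
  have "3 * D - 5 * U + 2 * w \<le> 2 * real (n ^ 2)"
    using down_cusps_bound[OF mo kt] unfolding D_def U_def w_def by linarith
  moreover have "3 * U - 5 * D + 2 * w \<le> 2 * real (n ^ 2)"
    using up_cusps_bound[OF mo kt] unfolding D_def U_def w_def by linarith
  moreover have "D + U - 2 * w \<le> 2 * real (n ^ 2)"
    using cusps_bound[OF mo kt] num_cusps_eq_down_plus_up[OF kt] unfolding D_def U_def w_def
    by linarith
  moreover have "tb M xs = w - (D + U) / 2" "rot xs = (D - U) / 2"
    using num_cusps_eq_down_plus_up[OF kt]
    unfolding tb_def rot_def D_def U_def w_def writhe_def by simp_all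
  ultimately show ?thesis by (simp add: abs_if field_simps)
qed

end
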